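(* Consider rounds $t=1,\dots,T$ in which the allocation $a_t$ is the MMF output for entitlements $e$, where agent $i$'s reported demand is $d_{it}=\hat\rho_{it}v_{it}$ (with $\hat\rho_{it}\ge0$) and the other agents' reported demands are arbitrary. Write $\tilde a_{it}=a_{it}/v_{it}$. Then $\sum_{t=1}^T u_i(e_i/v_{it})-\sum_{t=1}^Tu_i(a_{it}/v_{it})\le\sum_{t=1}^T\mathbf{1}(\tilde a_{it}=\hat\rho_{it}\wedge\tilde a_{it}<\rho_i)\,\big(u_i(\rho_i)-u_i(\hat\rho_{it})\big).$
   Context: A divisible resource of size $1$ is shared by $n$ agents with entitlements $e_i>0$, $\sum_ie_i=1$. MMF$(e,d)$ on reported demands $d_1,\dots,d_n\ge0$: set $r=1$, $E=1$, $S=\{1,\dots,n\}$, $a=0$; process agents $j$ in ascending order of $d_j/e_j$; if $d_j<re_j/E$, set $a_j=d_j$, remove $j$ from $S$, $r\leftarrow r-d_j$, $E\leftarrow E-e_j$ and continue; otherwise set $a_k=re_k/E$ for all $k\in S$ and stop; output $a$. Agent $i$ has loads $v_{it}>0$, unit demand $\rho_i\ge0$ (true demand $v_{it}\rho_i$), and a utility $u_i$ of allocation per unit load that is non-decreasing, strictly increasing on $[0,\rho_i]$ and constant on $[\rho_i,\infty)$. *)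

theory Defs
  imports Complex_Main
begin

text \<open>One pass of the MMF procedure: the list holds the agents still in S, in
ascending order of d_j/e_j; r is the remaining resource, E the remaining
entitlement. The allocation starts at 0 everywhere.\<close>
fun mmf_loop :: "(nat \<Rightarrow> real) \<Rightarrow> (nat \<Rightarrow> real) \<Rightarrow> nat list \<Rightarrow> real \<Rightarrow> real \<Rightarrow> (nat \<Rightarrow> real)" where
  "mmf_loop e d [] r E = (\<lambda>k. 0)"
| "mmf_loop e d (j # js) r E =
     (if d j < r * e j / E
      then (mmf_loop e d js (r - d j) (E - e j))(j := d j)
      else (\<lambda>k. if k \<in> set (j # js) then r * e k / E else 0))"

definition MMF :: "nat \<Rightarrow> (nat \<Rightarrow> real) \<Rightarrow> (nat \<Rightarrow> real) \<Rightarrow> (nat \<Rightarrow> real)" where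
  "MMF n e d = mmf_loop e d (sort_key (\<lambda>j. d j / e j) [0..<n]) 1 1"

end

theory Submission
  imports Defs
begin

text \<open>In every round MMF gives agent i either exactly its reported demand or at
least its entitlement e_i, whatever the processing order: the remaining resource
never falls below the remaining entitlement. In the second case agent i loses no
utility against u(e_i/v_t); in the first its per-unit allocation is \<rho>hat_t, so the
loss is at most u(\<rho>) - u(\<rho>hat_t), and zero when \<rho>hat_t \<ge> \<rho> since u is
saturated there.\<close>

lemma mmf_loop_eq_demand_or_ge_entitlement:
  assumes "distinct js" "\<forall>j\<in>set js. e j > 0" "E = (\<Sum>j\<in>set js. e j)" "E \<le> r" "i \<in> set js"
  shows "mmf_loop e d js r E i = d i \<or> e i \<le> mmf_loop e d js r E i"
  using assms
proof (induction js arbitrary: r E)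
  case Nil
  then show ?case by simp
next
  case (Cons j js)
  have E_pos: "E > 0"
    using Cons.prems by (simp add: add_pos_nonneg sum_nonneg less_imp_le)
  have E_rest: "E - e j = (\<Sum>j\<in>set js. e j)"
    using Cons.prems by simp
  have E_rest_nonneg: "E - e j \<ge> 0"
    unfolding E_rest using Cons.prems(2) by (simp add: sum_nonneg less_imp_le)
  show ?case
  proof (cases "d j < r * e j / E")
    case satisfied: True
    show ?thesis
    proof (cases "i = j")
      case True
      then show ?thesis using satisfied by simp
    next
      case False
      \<comment> \<open>The invariant E \<le> r survives: the satisfied agent takes less than its share r e_j / E.\<close>
      have "E - e j \<le> r - r * e j / E"
      proof -
        have "(E - e j) * E \<le> r * E - r * e j"
          using mult_right_mono[OF Cons.prems(4) E_rest_nonneg] by (simp add: algebra_simps)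
        moreover have "r - r * e j / E = (r * E - r * e j) / E"
          using E_pos by (simp add: field_simps)
        ultimately show ?thesis using E_pos by (simp add: le_divide_eq)
      qed
      then have "E - e j \<le> r - d j" using satisfied by linarith
      then have "mmf_loop e d js (r - d j) (E - e j) i = d i
                 \<or> e i \<le> mmf_loop e d js (r - d j) (E - e j) i"
        using Cons.IH[of "E - e j" "r - d j"] Cons.prems E_rest False by simp
      then show ?thesis using satisfied False by simp
    qed
  next
    case False
    have "e i > 0" using Cons.prems by auto
    then have "e i * E \<le> r * e i"
      using Cons.prems(4) by (simp add: mult.commute mult_right_mono)
    then have "e i \<le> r * e i / E" using E_pos by (simp add: le_divide_eq)
    then show ?thesis using False Cons.prems(5) by simp
  qed
qed

lemma MMF_eq_demand_or_ge_entitlement: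
  assumes "\<forall>j<n. e j > 0" "(\<Sum>j<n. e j) = 1" "i < n"
  shows "MMF n e d i = d i \<or> e i \<le> MMF n e d i"
proof -
  let ?js = "sort_key (\<lambda>j. d j / e j) [0..<n]"
  have set_js: "set ?js = {..<n}" by auto
  show ?thesis
    unfolding MMF_def
    by (rule mmf_loop_eq_demand_or_ge_entitlement) (use assms set_js in auto)
qed

lemma satiated_utility_le:
  fixes u :: "real \<Rightarrow> real"
  assumes u_mono: "mono_on {0..} u" and u_const: "\<forall>x\<ge>\<rho>. u x = u \<rho>"
    and "0 \<le> \<rho>" "0 \<le> x"
  shows "u x \<le> u \<rho>"
proof (cases "x \<le> \<rho>")
  case True
  then show ?thesis using u_mono \<open>0 \<le> x\<close> by (auto intro: mono_onD)
next
  case False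
  then show ?thesis using u_const[rule_format, of x] by simp
qed

lemma utility_loss_le:
  fixes u :: "real \<Rightarrow> real"
  assumes u_mono: "mono_on {0..} u" and u_const: "\<forall>x\<ge>\<rho>. u x = u \<rho>"
    and \<rho>: "0 \<le> \<rho>" and s: "0 \<le> s" and \<rho>hat: "0 \<le> \<rho>hat"
    and granted: "a = \<rho>hat \<or> s \<le> a"
  shows "u s - u a \<le> (if a = \<rho>hat \<and> a < \<rho> then u \<rho> - u \<rho>hat else 0)"
proof -
  have s_le: "u s \<le> u \<rho>" and \<rho>hat_le: "u \<rho>hat \<le> u \<rho>"
    using satiated_utility_le[OF u_mono u_const \<rho>] s \<rho>hat by auto
  from granted show ?thesis
  proof
    assume a: "a = \<rho>hat"
    show ?thesis
    proof (cases "a < \<rho>")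
      case True
      then show ?thesis using a s_le by simp
    next
      case False
      then have "u a = u \<rho>" using u_const[rule_format, of a] by simp
      then show ?thesis using False s_le by simp
    qed
  next
    assume "s \<le> a"
    then have "u s \<le> u a" using u_mono s by (auto intro: mono_onD)
    then show ?thesis using s_le \<rho>hat_le by simp
  qed
qed

theorem lemma5:
  fixes n :: nat and e :: "nat \<Rightarrow> real" and i :: nat and T :: nat
    and d :: "nat \<Rightarrow> nat \<Rightarrow> real"   \<comment> \<open>d t j: reported demand of agent j in round t\<close>
    and v :: "nat \<Rightarrow> real"             \<comment> \<open>v t: load of agent i in round t\<close>
    and \<rho> :: real and \<rho>hat :: "nat \<Rightarrow> real" and u :: "real \<Rightarrow> real"
  assumes e_pos: "\<forall>j<n. e j > 0"
    and e_sum: "(\<Sum>j<n. e j) = 1"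
    and i_lt: "i < n"
    and d_nonneg: "\<forall>t\<in>{1..T}. \<forall>j<n. d t j \<ge> 0"
    and v_pos: "\<forall>t\<in>{1..T}. v t > 0"
    and rho_nonneg: "\<rho> \<ge> 0"
    and rhohat_nonneg: "\<forall>t\<in>{1..T}. \<rho>hat t \<ge> 0"
    and d_i: "\<forall>t\<in>{1..T}. d t i = \<rho>hat t * v t"
    and u_mono: "mono_on {0..} u"
    and u_strict: "strict_mono_on {0..\<rho>} u"
    and u_const: "\<forall>x\<ge>\<rho>. u x = u \<rho>"
  shows "(\<Sum>t=1..T. u (e i / v t)) - (\<Sum>t=1..T. u (MMF n e (d t) i / v t))
         \<le> (\<Sum>t=1..T. (if MMF n e (d t) i / v t = \<rho>hat t \<and> MMF n e (d t) i / v t < \<rho>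
                        then u \<rho> - u (\<rho>hat t) else 0))"
proof -
  have round: "u (e i / v t) - u (MMF n e (d t) i / v t)
      \<le> (if MMF n e (d t) i / v t = \<rho>hat t \<and> MMF n e (d t) i / v t < \<rho>
          then u \<rho> - u (\<rho>hat t) else 0)" if t: "t \<in> {1..T}" for t
  proof (rule utility_loss_le[OF u_mono u_const rho_nonneg])
    have v: "v t > 0" using v_pos t by auto
    show "0 \<le> e i / v t" using v e_pos i_lt by (simp add: less_imp_le)
    show "0 \<le> \<rho>hat t" using rhohat_nonneg t by auto
    show "MMF n e (d t) i / v t = \<rho>hat t \<or> e i / v t \<le> MMF n e (d t) i / v t"
      using MMF_eq_demand_or_ge_entitlement[OF e_pos e_sum i_lt, of "d t"] d_i t v
      by (auto simp: divide_right_mono)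
  qed
  have "(\<Sum>t=1..T. u (e i / v t)) - (\<Sum>t=1..T. u (MMF n e (d t) i / v t))
      = (\<Sum>t=1..T. u (e i / v t) - u (MMF n e (d t) i / v t))"
    by (simp add: sum_subtractf)
  also have "\<dots> \<le> (\<Sum>t=1..T. (if MMF n e (d t) i / v t = \<rho>hat t \<and> MMF n e (d t) i / v t < \<rho>
                        then u \<rho> - u (\<rho>hat t) else 0))"
    using round by (rule sum_mono)
  finally show ?thesis .
qed

end
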